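(* For every integer $k\ge 3$, let $n=6k^2-5k$. Then there exists a finite simple edge-pancyclic graph of order $n$ with exactly $2n-k$ edges.
   Context: A $k$-cycle is a cycle of length $k$. A graph $G$ of order $n$ is edge-pancyclic if for every integer $m$ with $3\le m\le n$, every edge of $G$ lies in an $m$-cycle. *)

theory Defs
  imports Main
begin

definition simple_graph :: "'a set \<Rightarrow> 'a set set \<Rightarrow> bool" where
  "simple_graph V E \<longleftrightarrow> finite V \<and> (\<forall>e\<in>E. e \<subseteq> V \<and> card e = 2)"

definition is_cycle :: "'a set \<Rightarrow> 'a set set \<Rightarrow> 'a list \<Rightarrow> bool" where
  "is_cycle V E c \<longleftrightarrow> length c \<ge> 3 \<and> distinct c \<and> set c \<subseteq> V \<and>
     (\<forall>i < length c. {c ! i, c ! ((i + 1) mod length c)} \<in> E)"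

definition cycle_edges :: "'a list \<Rightarrow> 'a set set" where
  "cycle_edges c = {{c ! i, c ! ((i + 1) mod length c)} | i. i < length c}"

definition edge_pancyclic :: "'a set \<Rightarrow> 'a set set \<Rightarrow> bool" where
  "edge_pancyclic V E \<longleftrightarrow>
     (\<forall>m. 3 \<le> m \<and> m \<le> card V \<longrightarrow>
        (\<forall>e\<in>E. \<exists>c. is_cycle V E c \<and> length c = m \<and> e \<in> cycle_edges c))"

end

theory Submission
  imports Defs "HOL-Library.Sublist"
begin

text \<open>
  The graph lives on \<open>\<int>/n\<close> with \<open>n = k U\<close>, \<open>U = 2p + 1 = 6k - 5\<close> and \<open>p = 3k - 3\<close>. Take the
  Hamiltonian cycle \<open>0, 1, \<dots>, n - 1\<close> and cut it into \<open>k\<close> blocks of \<open>U\<close> consecutive vertices. In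
  the block starting at \<open>c\<close>, join the lower hub \<open>c + p + 1\<close> to \<open>c, \<dots>, c + p - 1\<close> and the upper
  hub \<open>c + p\<close> to \<open>c + p + 2, \<dots>, c + 2p + 1\<close>, the last of which starts the next block. This
  adds \<open>2p\<close> chords per block, so there are \<open>n + 2kp = 2n - k\<close> edges.

  Cycles through an edge of a block of length up to about \<open>2p\<close> stay inside the block: a fan at
  the lower hub, or a cycle through both hubs. A longer cycle first traverses the block along a
  path containing the edge and then crosses each of the other \<open>k - 1\<close> blocks by a path whose
  length can be anything between \<open>3\<close> and \<open>U\<close>; as \<open>3 (k - 1) = p\<close>, every total length up to \<open>n\<close> is
  reached. The reflection \<open>x \<mapsto> U - x\<close> is an automorphism swapping the two hubs of every
  block, so it suffices to treat the ring edges of the lower half of a block, its middle ring edge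
  and the edges at its lower hub. All of this is done in the lift of the graph to \<open>\<nat>\<close>, where adjacency is
  periodic and no block wraps around.
\<close>

lemma mod_eq_imp_eq_nat:
  fixes x y n :: nat
  assumes "x mod n = y mod n" "x \<le> y" "y < x + n"
  shows "x = y"
proof -
  have "n dvd y - x" using assms(1) mod_eq_dvd_iff_nat[OF assms(2)] by metis
  moreover have "y - x < n" using assms(2,3) by linarith
  ultimately have "y - x = 0" by (metis nat_dvd_not_less neq0_conv)
  then show ?thesis using assms(2) by simp
qed

lemma inj_on_mod_atLeastLessThan: "inj_on (\<lambda>x::nat. x mod n) {w..<w+n}"
proof (rule inj_onI)
  fix x y assume "x \<in> {w..<w+n}" "y \<in> {w..<w+n}" "x mod n = y mod n"
  then show "x = y"
    using mod_eq_imp_eq_nat[of x n y] mod_eq_imp_eq_nat[of y n x] by (cases "x \<le> y") auto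
qed

lemma successively_upt: "(\<And>x. R x (Suc x)) \<Longrightarrow> successively R [s..<t]"
proof (induction t)
  case (Suc t)
  then show ?case
    using Suc.prems[of "t - 1"] by (cases "s < t") (auto simp: successively_append_iff)
qed simp

lemma successively_append_Cons:
  "successively R (xs @ [x]) \<Longrightarrow> successively R (x # ys) \<Longrightarrow> successively R (xs @ x # ys)"
  by (induction xs) (auto simp: successively_Cons hd_append split: if_splits)

lemma sublist_upt:
  assumes "s \<le> x" "x + 1 < t"
  shows "sublist [x, x + 1] (ps @ [s..<t] @ ss)"
proof -
  have "[s..<t] = [s..<x] @ [x, x + 1] @ [x + 2..<t]"
    using assms upt_add_eq_append[of s x "t - x"] by (simp add: upt_conv_Cons)
  then show ?thesis by (metis sublist_appendI sublist_order.order.trans)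
qed

lemma cycle_edges_conv_image:
  "cycle_edges c = (\<lambda>i. {c ! i, c ! ((i + 1) mod length c)}) ` {..<length c}"
  unfolding cycle_edges_def by auto

lemma cycle_edges_map: "cycle_edges (map f c) = image f ` cycle_edges c"
  unfolding cycle_edges_conv_image length_map image_image
proof (rule image_cong)
  fix i assume "i \<in> {..<length c}"
  then have "(i + 1) mod length c < length c" by (auto intro: mod_less_divisor)
  then show "{map f c ! i, map f c ! ((i + 1) mod length c)} = f ` {c ! i, c ! ((i + 1) mod length c)}"
    using \<open>i \<in> {..<length c}\<close> by simp
qed simp

lemma sublist_imp_cycle_edge: "sublist [a, b] c \<Longrightarrow> {a, b} \<in> cycle_edges c"
proof -
  assume "sublist [a, b] c"
  then obtain xs ys where c: "c = xs @ a # b # ys" by (auto simp: sublist_def)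
  then have "{a, b} = {c ! length xs, c ! ((length xs + 1) mod length c)}" "length xs < length c"
    by (simp_all add: nth_append)
  then show ?thesis unfolding cycle_edges_def by blast
qed

lemma last_hd_in_cycle_edges: "c \<noteq> [] \<Longrightarrow> {last c, hd c} \<in> cycle_edges c"
proof -
  assume "c \<noteq> []"
  then have "{last c, hd c} = {c ! (length c - 1), c ! ((length c - 1 + 1) mod length c)}"
    by (simp add: last_conv_nth hd_conv_nth)
  moreover have "length c - 1 < length c" using \<open>c \<noteq> []\<close> by simp
  ultimately show ?thesis unfolding cycle_edges_def by blast
qed

lemma is_cycleI:
  assumes "3 \<le> length c" "distinct c" "set c \<subseteq> V"
    and "successively (\<lambda>x y. {x, y} \<in> E) c" "{last c, hd c} \<in> E"
  shows "is_cycle V E c"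
  unfolding is_cycle_def
proof (intro conjI allI impI)
  fix i assume i: "i < length c"
  show "{c ! i, c ! ((i + 1) mod length c)} \<in> E"
  proof (cases "Suc i < length c")
    case True
    then show ?thesis using successively_nth[OF assms(4)] by simp
  next
    case False
    then have "i = length c - 1" "Suc i = length c" using i by simp_all
    moreover have "c \<noteq> []" using assms(1) by auto
    ultimately show ?thesis using assms(5) by (simp add: last_conv_nth hd_conv_nth)
  qed
qed (use assms in auto)

lemma sum_min_greedy: "(\<Sum>t<N. min D (r - t * D)) = min r (N * D :: nat)"
  by (induction N) (auto simp: min_def)

lemma doubleton_add_mod_eq:
  fixes n x y d e :: nat
  assumes "x < n" "y < n" "0 < d" "0 < e" "d + e < n"
    and eq: "{x, (x + d) mod n} = {y, (y + e) mod n}"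
  shows "x = y \<and> d = e"
  using eq unfolding doubleton_eq_iff
proof
  assume "x = y \<and> (x + d) mod n = (y + e) mod n"
  then show ?thesis
    using mod_eq_imp_eq_nat[of "x + d" n "x + e"] mod_eq_imp_eq_nat[of "x + e" n "x + d"] assms(5)
    by (cases "d \<le> e") auto
next
  assume "x = (y + e) mod n \<and> (x + d) mod n = y"
  then have "y mod n = (y + (e + d)) mod n"
    using assms(2) by (metis add.assoc mod_add_left_eq mod_less)
  then show ?thesis using mod_eq_imp_eq_nat[of y n "y + (e + d)"] assms(3-5) by simp
qed

section \<open>The graph and its lift to the natural numbers\<close>

locale pancyclic_construction =
  fixes k p U n :: nat
  assumes k_ge: "3 \<le> k" and p_eq: "p = 3 * k - 3" and U_eq: "U = 2 * p + 1" and n_eq: "n = k * U"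
begin

lemma p_ge: "6 \<le> p"
  using k_ge p_eq by simp

lemma p_eq_3_mult: "p = 3 * (k - 1)"
  using p_eq by simp

lemma n_eq_U_add: "n = U + U * (k - 1)"
  using n_eq k_ge by (cases k) (simp_all add: algebra_simps)

lemma U_dvd_n: "U dvd n"
  using n_eq by simp

lemma three_U_le_n: "3 * U \<le> n"
  using n_eq k_ge by simp

lemma U_pos: "0 < U"
  using U_eq by simp

lemma n_pos: "0 < n"
  using three_U_le_n U_pos by simp

definition arc :: "nat \<Rightarrow> nat \<Rightarrow> bool" where
  "arc a b \<longleftrightarrow> b = Suc a
     \<or> (\<exists>c j. U dvd c \<and> j < p \<and> a = c + p + 1 \<and> b = c + j)
     \<or> (\<exists>c j. U dvd c \<and> j < p \<and> a = c + p \<and> b = c + p + 2 + j)"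

definition adj :: "nat \<Rightarrow> nat \<Rightarrow> bool" where
  "adj a b \<longleftrightarrow> arc a b \<or> arc b a"

lemma arc_lower_hubI: "U dvd c \<Longrightarrow> j < p \<Longrightarrow> arc (c + p + 1) (c + j)"
  unfolding arc_def by blast

lemma arc_upper_hubI: "U dvd c \<Longrightarrow> j < p \<Longrightarrow> arc (c + p) (c + p + 2 + j)"
  unfolding arc_def by blast

lemma adj_commute: "adj a b \<longleftrightarrow> adj b a"
  unfolding adj_def by blast

lemma adj_Suc: "adj x (Suc x)"
  unfolding adj_def arc_def by simp

lemma successively_adj_upt: "successively adj [s..<t]"
  by (rule successively_upt) (rule adj_Suc)

lemma adj_lower_hub:
  assumes "U dvd c" "j \<le> p"
  shows "adj (c + p + 1) (c + j)"
proof (cases "j = p")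
  case True
  then have "adj (c + j) (c + p + 1)" using adj_Suc[of "c + p"] by simp
  then show ?thesis by (simp only: adj_commute)
next
  case False
  then have "j < p" using assms(2) by simp
  then show ?thesis using arc_lower_hubI[OF assms(1)] unfolding adj_def by blast
qed

lemma adj_upper_hub:
  assumes "U dvd c" "1 \<le> t" "t \<le> p + 1"
  shows "adj (c + p) (c + p + t)"
proof (cases "t = 1")
  case True
  then show ?thesis using adj_Suc[of "c + p"] by simp
next
  case False
  then have "c + p + t = c + p + 2 + (t - 2)" "t - 2 < p" using assms(2,3) by auto
  then show ?thesis using arc_upper_hubI[OF assms(1)] unfolding adj_def by metis
qed

lemma arc_shift:
  assumes "arc a b"
  shows "arc (a + n) (b + n)"
proof -
  have dvd: "U dvd c \<Longrightarrow> U dvd c + n" for c using U_dvd_n by simp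
  from assms consider "b = Suc a"
    | c j where "U dvd c" "j < p" "a = c + p + 1" "b = c + j"
    | c j where "U dvd c" "j < p" "a = c + p" "b = c + p + 2 + j"
    unfolding arc_def by blast
  then show ?thesis
  proof cases
    case 1
    then show ?thesis unfolding arc_def by simp
  next
    case (2 c j)
    have "arc ((c + n) + p + 1) ((c + n) + j)" using 2(1,2) dvd by (intro arc_lower_hubI)
    then show ?thesis using 2(3,4) by (simp add: ac_simps)
  next
    case (3 c j)
    have "arc ((c + n) + p) ((c + n) + p + 2 + j)" using 3(1,2) dvd by (intro arc_upper_hubI)
    then show ?thesis using 3(3,4) by (simp add: ac_simps)
  qed
qed

lemma adj_shift: "adj a b \<Longrightarrow> adj (a + n) (b + n)"
  unfolding adj_def using arc_shift by blast

lemma arc_reflect: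
  assumes "arc a b" "a \<le> M" "b \<le> M" "U dvd M"
  shows "adj (M - a) (M - b)"
proof -
  have below: "c + U \<le> M" if "U dvd c" "c < M" for c
  proof -
    have "U dvd M - c" using that assms(4) by (simp add: dvd_diff_nat)
    then have "U \<le> M - c" using that(2) by (simp add: dvd_imp_le)
    then show ?thesis using that(2) by linarith
  qed
  from assms(1) consider "b = Suc a"
    | c j where "U dvd c" "j < p" "a = c + p + 1" "b = c + j"
    | c j where "U dvd c" "j < p" "a = c + p" "b = c + p + 2 + j"
    unfolding arc_def by blast
  then show ?thesis
  proof cases
    case 1
    then have "M - a = Suc (M - b)" using assms(3) by simp
    then show ?thesis using adj_Suc[of "M - b"] by (simp only: adj_commute)
  next
    case (2 c j)
    define d where "d = M - (c + U)"
    have "U dvd d" unfolding d_def using 2(1) assms(4) by (simp add: dvd_diff_nat)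
    have "c + U \<le> M" using below[of c] 2 assms(2) by simp
    then have "M - a = d + p" "M - b = d + p + 2 + (p - 1 - j)"
      using 2 U_eq unfolding d_def by auto
    moreover have "arc (d + p) (d + p + 2 + (p - 1 - j))"
      using \<open>U dvd d\<close> p_ge by (intro arc_upper_hubI) simp_all
    ultimately show ?thesis unfolding adj_def by simp
  next
    case (3 c j)
    define d where "d = M - (c + U)"
    have "U dvd d" unfolding d_def using 3(1) assms(4) by (simp add: dvd_diff_nat)
    have "c + U \<le> M" using below[of c] 3 assms(2) by simp
    then have "M - a = d + p + 1" "M - b = d + (p - 1 - j)"
      using 3 U_eq unfolding d_def by auto
    moreover have "arc (d + p + 1) (d + (p - 1 - j))"
      using \<open>U dvd d\<close> p_ge by (intro arc_lower_hubI) simp_all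
    ultimately show ?thesis unfolding adj_def by simp
  qed
qed

lemma adj_reflect:
  assumes "adj a b" "a \<le> M" "b \<le> M" "U dvd M"
  shows "adj (M - a) (M - b)"
  using assms arc_reflect[of a b M] arc_reflect[of b a M] adj_commute unfolding adj_def[of a b]
  by blast

definition blocks :: "nat set" where
  "blocks = {c. U dvd c \<and> c < n}"

lemma blocks_le: "c \<in> blocks \<Longrightarrow> c + U \<le> n"
proof -
  assume "c \<in> blocks"
  then have "U dvd n - c" "c < n" using U_dvd_n by (auto simp: blocks_def dvd_diff_nat)
  then have "U \<le> n - c" by (simp add: dvd_imp_le)
  then show "c + U \<le> n" using \<open>c < n\<close> by linarith
qed

lemma card_blocks: "card blocks = k"
proof -
  have "blocks = (\<lambda>i. U * i) ` {i. U * i < n}"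
    unfolding blocks_def by (auto elim!: dvdE)
  also have "{i. U * i < n} = {..<k}"
    unfolding n_eq using U_pos by (auto simp: mult.commute[of k])
  finally have "blocks = (\<lambda>i. U * i) ` {..<k}" .
  moreover have "inj_on (\<lambda>i. U * i) {..<k}" using U_pos by (simp add: inj_on_def)
  ultimately show ?thesis by (simp add: card_image)
qed

lemma mod_n_in_blocks: "U dvd c \<Longrightarrow> c mod n \<in> blocks"
  using U_dvd_n n_pos by (simp add: blocks_def dvd_mod)

lemma mod_n_block_add:
  assumes "U dvd c" "r < U"
  shows "(c + r) mod n = c mod n + r"
proof -
  have "c mod n + r < n" using blocks_le[OF mod_n_in_blocks[OF assms(1)]] assms(2) by simp
  then show ?thesis by (metis mod_add_left_eq mod_less)
qed

text \<open>An edge is encoded by a chord \<open>(x, d)\<close> joining \<open>x\<close> to \<open>x + d\<close> modulo \<open>n\<close>; since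
  \<open>0 < d \<le> p + 1 < n / 2\<close>, distinct chords give distinct edges.\<close>

definition chords :: "(nat \<times> nat) set" where
  "chords = (\<lambda>x. (x, 1)) ` {..<n}
     \<union> (\<lambda>(c, j). (c + j, p + 1 - j)) ` (blocks \<times> {..<p})
     \<union> (\<lambda>(c, j). (c + p, j + 2)) ` (blocks \<times> {..<p})"

definition edges :: "nat set set" where
  "edges = (\<lambda>(x, d). {x, (x + d) mod n}) ` chords"

lemma chords_bounds:
  assumes "(x, d) \<in> chords"
  shows "x < n" "0 < d" "d \<le> p + 1"
proof -
  have "c + j < n" if "c \<in> blocks" "j \<le> p" for c j using blocks_le[OF that(1)] that(2) U_eq by simp
  then show "x < n" "0 < d" "d \<le> p + 1" using assms unfolding chords_def by auto
qed

lemma card_chords: "card chords = n + 2 * k * p"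
proof -
  define R where "R = (\<lambda>x. (x, 1::nat)) ` {..<n}"
  define A where "A = (\<lambda>(c, j). (c + j, p + 1 - j)) ` (blocks \<times> {..<p})"
  define B where "B = (\<lambda>(c, j). (c + p, j + 2)) ` (blocks \<times> {..<p})"
  have residue: "(c + j) mod U = j" if "c \<in> blocks" "j < U" for c j
    using that by (auto simp: blocks_def)
  have "card R = n" unfolding R_def by (simp add: card_image inj_on_def)
  moreover have "card A = k * p"
  proof -
    have "inj_on (\<lambda>(c, j). (c + j, p + 1 - j)) (blocks \<times> {..<p})" by (auto simp: inj_on_def)
    then show ?thesis unfolding A_def by (simp add: card_image card_cartesian_product card_blocks)
  qed
  moreover have "card B = k * p"
  proof -
    have "inj_on (\<lambda>(c, j). (c + p, j + 2)) (blocks \<times> {..<p})" by (auto simp: inj_on_def)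
    then show ?thesis unfolding B_def by (simp add: card_image card_cartesian_product card_blocks)
  qed
  moreover have "R \<inter> A = {}" "R \<inter> B = {}" unfolding R_def A_def B_def by auto
  moreover have "A \<inter> B = {}"
  proof -
    have "c + j \<noteq> c' + p" if "c \<in> blocks" "c' \<in> blocks" "j < p" for c c' j
      using residue[of c j] residue[of c' p] that U_eq by auto
    then show ?thesis unfolding A_def B_def by fastforce
  qed
  moreover have "finite R" "finite A" "finite B"
    unfolding R_def A_def B_def blocks_def by auto
  ultimately show ?thesis
    unfolding chords_def R_def[symmetric] A_def[symmetric] B_def[symmetric]
    by (simp add: card_Un_disjoint Int_Un_distrib2)
qed

lemma card_edges: "card edges = 2 * n - k"
proof -
  have "inj_on (\<lambda>(x, d). {x, (x + d) mod n}) chords"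
  proof (rule inj_onI, clarify)
    fix x d y e assume "(x, d) \<in> chords" "(y, e) \<in> chords" "{x, (x + d) mod n} = {y, (y + e) mod n}"
    then show "x = y \<and> d = e"
      using chords_bounds[of x d] chords_bounds[of y e] three_U_le_n U_eq
      by (intro doubleton_add_mod_eq) simp_all
  qed
  then have "card edges = n + 2 * k * p" unfolding edges_def by (simp add: card_image card_chords)
  also have "\<dots> = 2 * n - k" using n_eq U_eq by (simp add: algebra_simps)
  finally show ?thesis .
qed

lemma simple_graph_edges: "simple_graph {..<n} edges"
  unfolding simple_graph_def
proof (intro conjI ballI)
  fix e assume "e \<in> edges"
  then obtain x d where xd: "(x, d) \<in> chords" "e = {x, (x + d) mod n}" unfolding edges_def by auto
  then have "x < n" "0 < d" "d < n" using chords_bounds[of x d] three_U_le_n U_eq by simp_all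
  moreover have "x \<noteq> (x + d) mod n"
    using mod_eq_imp_eq_nat[of x n "x + d"] \<open>x < n\<close> \<open>0 < d\<close> \<open>d < n\<close> by auto
  ultimately show "e \<subseteq> {..<n}" "card e = 2" using xd(2) by auto
qed simp

lemma chord_in_edges: "(x, d) \<in> chords \<Longrightarrow> {x, (x + d) mod n} \<in> edges"
  unfolding edges_def by (rule image_eqI[where x = "(x, d)"]) simp_all

lemma ring_edge_in_edges: "x < n \<Longrightarrow> {x, Suc x mod n} \<in> edges"
  using chord_in_edges[of x 1] unfolding chords_def by simp

lemma lower_hub_edge_in_edges:
  assumes "c \<in> blocks" "j < p"
  shows "{c + p + 1, c + j} \<in> edges"
proof -
  have "(c + j, p + 1 - j) \<in> chords"
    unfolding chords_def using assms by (intro UnI1 UnI2 image_eqI[where x = "(c, j)"]) simp_all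
  moreover have "(c + j + (p + 1 - j)) mod n = c + p + 1"
    using blocks_le[OF assms(1)] assms(2) U_eq by simp
  ultimately show ?thesis using chord_in_edges by (metis insert_commute)
qed

lemma upper_hub_edge_in_edges:
  assumes "c \<in> blocks" "j < p"
  shows "{c + p, (c + p + 2 + j) mod n} \<in> edges"
proof -
  have "(c + p, j + 2) \<in> chords"
    unfolding chords_def using assms by (intro UnI2 image_eqI[where x = "(c, j)"]) simp_all
  from chord_in_edges[OF this] show ?thesis by (simp add: ac_simps)
qed

lemma arc_edge:
  assumes "arc a b"
  shows "{a mod n, b mod n} \<in> edges"
proof -
  from assms consider "b = Suc a"
    | c j where "U dvd c" "j < p" "a = c + p + 1" "b = c + j"
    | c j where "U dvd c" "j < p" "a = c + p" "b = c + p + 2 + j"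
    unfolding arc_def by blast
  then show ?thesis
  proof cases
    case 1
    then show ?thesis using ring_edge_in_edges[of "a mod n"] n_pos by (simp add: mod_Suc_eq)
  next
    case (2 c j)
    then have "a mod n = c mod n + p + 1" "b mod n = c mod n + j"
      using mod_n_block_add[OF 2(1), of "p + 1"] mod_n_block_add[OF 2(1), of j] U_eq by simp_all
    then show ?thesis using lower_hub_edge_in_edges[OF mod_n_in_blocks[OF 2(1)] 2(2)] by simp
  next
    case (3 c j)
    then have "a mod n = c mod n + p" "b mod n = (c mod n + p + 2 + j) mod n"
      using mod_n_block_add[OF 3(1), of p] U_eq by (simp, metis add.assoc mod_add_left_eq)
    then show ?thesis using upper_hub_edge_in_edges[OF mod_n_in_blocks[OF 3(1)] 3(2)] by simp
  qed
qed

lemma adj_edge: "adj a b \<Longrightarrow> {a mod n, b mod n} \<in> edges"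
  unfolding adj_def by (metis arc_edge insert_commute)

section \<open>Lifted cycles\<close>

text \<open>A lifted cycle lies in a window of \<open>n\<close> consecutive integers, so it projects injectively
  to \<open>\<int>/n\<close>; only its closing edge may leave the window.\<close>

definition adj_wrap :: "nat \<Rightarrow> nat \<Rightarrow> bool" where
  "adj_wrap a b \<longleftrightarrow> adj a b \<or> adj a (b + n) \<or> adj (a + n) b"

definition lifted_cycle :: "nat \<Rightarrow> nat list \<Rightarrow> bool" where
  "lifted_cycle w c \<longleftrightarrow> 3 \<le> length c \<and> distinct c \<and> set c \<subseteq> {w..<w + n}
     \<and> successively adj c \<and> adj_wrap (last c) (hd c)"

lemma adj_wrap_edge: "adj_wrap a b \<Longrightarrow> {a mod n, b mod n} \<in> edges"
  unfolding adj_wrap_def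
    using adj_edge[of a b] adj_edge[of a "b + n"] adj_edge[of "a + n" b] by auto

lemma lifted_cycle_is_cycle:
  assumes "lifted_cycle w c"
  shows "is_cycle {..<n} edges (map (\<lambda>x. x mod n) c)"
proof (rule is_cycleI)
  have c: "3 \<le> length c" "distinct c" "set c \<subseteq> {w..<w + n}" "successively adj c"
    "adj_wrap (last c) (hd c)"
    using assms unfolding lifted_cycle_def by auto
  then show "3 \<le> length (map (\<lambda>x. x mod n) c)" by simp
  show "distinct (map (\<lambda>x. x mod n) c)"
    using c(2) inj_on_subset[OF inj_on_mod_atLeastLessThan c(3)] by (simp add: distinct_map)
  show "set (map (\<lambda>x. x mod n) c) \<subseteq> {..<n}" using n_pos by auto
  show "successively (\<lambda>x y. {x, y} \<in> edges) (map (\<lambda>x. x mod n) c)"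
    unfolding successively_map using c(4) by (rule successively_mono) (rule adj_edge)
  have "c \<noteq> []" using c(1) by auto
  then show "{last (map (\<lambda>x. x mod n) c), hd (map (\<lambda>x. x mod n) c)} \<in> edges"
    using adj_wrap_edge[OF c(5)] by (simp add: last_map hd_map)
qed

lemma adj_wrap_reflect:
  assumes "adj_wrap a b" "a + n \<le> M" "b + n \<le> M" "U dvd M"
  shows "adj_wrap (M - a) (M - b)"
proof -
  from assms(1) consider "adj a b" | "adj a (b + n)" | "adj (a + n) b"
    unfolding adj_wrap_def by blast
  then show ?thesis
  proof cases
    case 1
    then show ?thesis using adj_reflect assms(2-4) unfolding adj_wrap_def by simp
  next
    case 2
    then have "adj (M - a) (M - (b + n))" using adj_reflect assms(2-4) by simp
    then have "adj (M - a + n) (M - (b + n) + n)" by (rule adj_shift)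
    moreover have "M - (b + n) + n = M - b" using assms(3) by simp
    ultimately show ?thesis unfolding adj_wrap_def by auto
  next
    case 3
    then have "adj (M - (a + n)) (M - b)" using adj_reflect assms(2-4) by simp
    then have "adj (M - (a + n) + n) (M - b + n)" by (rule adj_shift)
    moreover have "M - (a + n) + n = M - a" using assms(2) by simp
    ultimately show ?thesis unfolding adj_wrap_def by auto
  qed
qed

lemma lifted_cycle_reflect:
  assumes c: "lifted_cycle w c" and M: "U dvd M" and below: "\<forall>x\<in>set c. x + n \<le> M"
  shows "lifted_cycle (M + 1 - w - n) (map ((-) M) c)"
proof -
  have len: "3 \<le> length c" and dis: "distinct c" and win: "set c \<subseteq> {w..<w + n}"
    and succ: "successively adj c" and wrap: "adj_wrap (last c) (hd c)"
    using c unfolding lifted_cycle_def by auto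
  have ne: "c \<noteq> []" using len by auto
  have "hd c \<in> set c" using ne by simp
  then have "w + n \<le> M" using below win by fastforce
  then have "set (map ((-) M) c) \<subseteq> {M + 1 - w - n..<M + 1 - w - n + n}"
    using below win by fastforce
  moreover have "inj_on ((-) M) (set c)"
    using below by (intro inj_onI) (metis add_leD1 diff_diff_cancel)
  then have "distinct (map ((-) M) c)" using dis by (simp add: distinct_map)
  moreover have "successively adj (map ((-) M) c)"
    unfolding successively_map using succ
  proof (rule successively_mono)
    fix x y assume "x \<in> set c" "y \<in> set c" "adj x y"
    then show "adj (M - x) (M - y)" using below adj_reflect[of x y M] M by fastforce
  qed
  moreover have "adj_wrap (M - last c) (M - hd c)"
    using adj_wrap_reflect[OF wrap _ _ M] below ne by simp
  ultimately show ?thesis unfolding lifted_cycle_def using len ne by (simp add: last_map hd_map)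
qed

definition pancyclic_edge :: "nat set \<Rightarrow> bool" where
  "pancyclic_edge e \<longleftrightarrow> (\<forall>m. 3 \<le> m \<and> m \<le> n \<longrightarrow>
     (\<exists>c. is_cycle {..<n} edges c \<and> length c = m \<and> e \<in> cycle_edges c))"

definition lifted_pancyclic :: "nat \<Rightarrow> nat \<Rightarrow> nat \<Rightarrow> bool" where
  "lifted_pancyclic w a b \<longleftrightarrow> (\<forall>m. 3 \<le> m \<and> m \<le> n \<longrightarrow>
     (\<exists>c. lifted_cycle w c \<and> length c = m \<and> {a, b} \<in> cycle_edges c))"

lemma pancyclic_edge_mod:
  assumes "lifted_pancyclic w a b"
  shows "pancyclic_edge {a mod n, b mod n}"
  unfolding pancyclic_edge_def
proof (intro allI impI)
  fix m assume "3 \<le> m \<and> m \<le> n"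
  then obtain c where c: "lifted_cycle w c" "length c = m" "{a, b} \<in> cycle_edges c"
    using assms unfolding lifted_pancyclic_def by blast
  have "{a mod n, b mod n} \<in> cycle_edges (map (\<lambda>x. x mod n) c)"
    unfolding cycle_edges_map by (rule image_eqI[OF _ c(3)]) simp
  then show "\<exists>c. is_cycle {..<n} edges c \<and> length c = m \<and> {a mod n, b mod n} \<in> cycle_edges c"
    using lifted_cycle_is_cycle[OF c(1)] c(2) by (intro exI[of _ "map (\<lambda>x. x mod n) c"]) simp
qed

lemma lifted_pancyclic_reflect:
  assumes "lifted_pancyclic w a b" "U dvd M" "w + 2 * n \<le> M"
  shows "lifted_pancyclic (M + 1 - w - n) (M - a) (M - b)"
  unfolding lifted_pancyclic_def
proof (intro allI impI)
  fix m assume "3 \<le> m \<and> m \<le> n"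
  then obtain c where c: "lifted_cycle w c" "length c = m" "{a, b} \<in> cycle_edges c"
    using assms(1) unfolding lifted_pancyclic_def by blast
  have "\<forall>x\<in>set c. x + n \<le> M" using c(1) assms(3) unfolding lifted_cycle_def by auto
  then have "lifted_cycle (M + 1 - w - n) (map ((-) M) c)"
    using lifted_cycle_reflect c(1) assms(2) by blast
  moreover have "{M - a, M - b} \<in> cycle_edges (map ((-) M) c)"
    unfolding cycle_edges_map by (rule image_eqI[OF _ c(3)]) simp
  ultimately show "\<exists>c'. lifted_cycle (M + 1 - w - n) c' \<and> length c' = m \<and> {M - a, M - b} \<in> cycle_edges c'"
    using c(2) by (intro exI[of _ "map ((-) M) c"]) simp
qed

section \<open>Paths through blocks\<close>

text \<open>The successor \<open>c + L\<close> of the segment is appended so that paths through consecutive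
  segments concatenate.\<close>

definition lifted_path :: "nat \<Rightarrow> nat \<Rightarrow> nat list \<Rightarrow> bool" where
  "lifted_path c L P \<longleftrightarrow> P \<noteq> [] \<and> hd P = c \<and> distinct P \<and> set P \<subseteq> {c..<c + L}
     \<and> successively adj (P @ [c + L])"

lemma lifted_path_append:
  assumes "lifted_path c L P" "lifted_path (c + L) L' Q"
  shows "lifted_path c (L + L') (P @ Q)"
proof -
  have P: "P \<noteq> []" "hd P = c" "distinct P" "set P \<subseteq> {c..<c + L}" "successively adj (P @ [c + L])"
    using assms(1) unfolding lifted_path_def by auto
  have Q: "Q \<noteq> []" "hd Q = c + L" "distinct Q" "set Q \<subseteq> {c + L..<c + L + L'}"
    "successively adj (Q @ [c + L + L'])"
    using assms(2) unfolding lifted_path_def by auto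
  have Q_eq: "Q = (c + L) # tl Q" using Q(1,2) by (cases Q) auto
  have "successively adj (P @ (c + L) # tl Q @ [c + (L + L')])"
    by (rule successively_append_Cons[OF P(5)]) (metis Q(5) Q_eq append_Cons add.assoc)
  moreover have "P @ (c + L) # tl Q @ [c + (L + L')] = (P @ Q) @ [c + (L + L')]"
    by (subst (2) Q_eq) simp
  moreover have "set P \<inter> set Q = {}" using P(4) Q(4) by (fastforce simp: subset_eq)
  ultimately show ?thesis
    unfolding lifted_path_def using P Q by auto
qed

lemma lifted_path_concat:
  assumes "0 < N" "\<And>t. t < N \<Longrightarrow> lifted_path (c + t * L) L (Q t)"
  shows "lifted_path c (N * L) (concat (map Q [0..<N]))"
  using assms
proof (induction N)
  case (Suc N)
  show ?case
  proof (cases "N = 0")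
    case True
    then show ?thesis using Suc.prems(2)[of 0] by simp
  next
    case False
    then have "lifted_path c (N * L) (concat (map Q [0..<N]))" using Suc by simp
    from lifted_path_append[OF this] Suc.prems(2)[of N]
    show ?thesis by (simp add: add.commute)
  qed
qed simp

lemma lifted_path_cycle:
  assumes "lifted_path c n P" "3 \<le> length P"
  shows "lifted_cycle c P"
proof -
  have "adj (last P) (c + n)"
    using assms(1) unfolding lifted_path_def by (auto simp: successively_append_iff)
  then show ?thesis
    using assms unfolding lifted_path_def lifted_cycle_def adj_wrap_def
    by (auto simp: successively_append_iff)
qed

definition block_path :: "nat \<Rightarrow> nat \<Rightarrow> nat \<Rightarrow> nat \<Rightarrow> nat list" where
  "block_path c a b j = [c..<c + a] @ (c + p + 1) # [c + b..<c + p + 1] @ [c + U - j..<c + U]"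

lemma length_block_path:
  "b \<le> p \<Longrightarrow> j < p \<Longrightarrow> length (block_path c a b j) = a + (p + 1 - b) + j + 1"
  unfolding block_path_def using U_eq by (simp del: upt_Suc)

lemma lifted_path_block_path:
  assumes c: "U dvd c" and ab: "1 \<le> a" "a \<le> b" "b \<le> p" and j: "j < p"
  shows "lifted_path c U (block_path c a b j)"
proof -
  define X where "X = [c..<c + a]"
  define Z where "Z = [c + b..<c + p + 1]"
  define Y where "Y = [c + U - j..<c + U + 1]"
  have top: "c + U - j = c + p + (p + 1 - j)" using j U_eq by simp
  have X: "X \<noteq> []" "last X = c + (a - 1)" "successively adj X"
    using ab successively_adj_upt unfolding X_def by auto
  have Z: "Z \<noteq> []" "hd Z = c + b" "last Z = c + p" "successively adj Z"
    using ab successively_adj_upt unfolding Z_def by (auto simp del: upt_Suc)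
  have Y: "Y \<noteq> []" "hd Y = c + U - j" "successively adj Y"
    using successively_adj_upt unfolding Y_def by (auto simp del: upt_Suc)
  have "adj (c + (a - 1)) (c + p + 1)"
    using adj_lower_hub[OF c, of "a - 1"] ab by (simp add: adj_commute)
  moreover have "adj (c + p + 1) (c + b)" using adj_lower_hub[OF c ab(3)] .
  moreover have "adj (c + p) (c + U - j)"
    unfolding top using j by (intro adj_upper_hub[OF c]) simp_all
  ultimately have "successively adj (X @ (c + p + 1) # Z @ Y)"
    using X Z Y by (simp add: successively_append_iff successively_Cons)
  moreover have "block_path c a b j @ [c + U] = X @ (c + p + 1) # Z @ Y"
    unfolding block_path_def X_def Z_def Y_def by simp
  ultimately show ?thesis
    unfolding lifted_path_def block_path_def top using ab j U_eq by (auto simp del: upt_Suc)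
qed

definition upper_jump_path :: "nat \<Rightarrow> nat \<Rightarrow> nat list" where
  "upper_jump_path c j = [c..<c + p + 1] @ [c + U - j..<c + U]"

lemma length_upper_jump_path: "j \<le> p \<Longrightarrow> length (upper_jump_path c j) = p + 1 + j"
  unfolding upper_jump_path_def using U_eq by (simp del: upt_Suc)

lemma lifted_path_upper_jump_path:
  assumes c: "U dvd c" and j: "j \<le> p"
  shows "lifted_path c U (upper_jump_path c j)"
proof -
  define X where "X = [c..<c + p + 1]"
  define Y where "Y = [c + U - j..<c + U + 1]"
  have top: "c + U - j = c + p + (p + 1 - j)" using j U_eq by simp
  have X: "X \<noteq> []" "last X = c + p" "successively adj X"
    using successively_adj_upt unfolding X_def by (auto simp del: upt_Suc)
  have Y: "Y \<noteq> []" "hd Y = c + U - j" "successively adj Y"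
    using successively_adj_upt unfolding Y_def by (auto simp del: upt_Suc)
  have "adj (c + p) (c + U - j)"
    unfolding top using j by (intro adj_upper_hub[OF c]) simp_all
  then have "successively adj (X @ Y)" using X Y by (simp add: successively_append_iff)
  moreover have "upper_jump_path c j @ [c + U] = X @ Y"
    unfolding upper_jump_path_def X_def Y_def by simp
  ultimately show ?thesis
    unfolding lifted_path_def upper_jump_path_def top using j U_eq by (auto simp del: upt_Suc)
qed

lemma lifted_path_of_length:
  assumes "U dvd c" "3 \<le> L" "L \<le> U"
  shows "\<exists>P. lifted_path c U P \<and> length P = L"
proof -
  define a where "a = min (L - 2) p"
  have a: "1 \<le> a" "a \<le> p" "L - 2 - a < p" using assms(2,3) p_ge U_eq unfolding a_def by auto
  have "length (block_path c a p (L - 2 - a)) = L"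
    using length_block_path[OF order_refl a(3)] a(1,2) assms(2) unfolding a_def by simp
  then show ?thesis using lifted_path_block_path[OF assms(1) a(1,2) order_refl a(3)] by blast
qed

text \<open>The other \<open>k - 1\<close> blocks are crossed by paths of lengths between \<open>3\<close> and \<open>U\<close>, allotted
  greedily; the lower bound \<open>p\<close> is \<open>3 (k - 1)\<close>.\<close>

lemma lifted_cycle_extend:
  assumes c: "U dvd c" and S: "lifted_path c U S" and R: "p \<le> R" "R \<le> U * (k - 1)"
  shows "\<exists>ys. lifted_cycle c (S @ ys) \<and> length ys = R"
proof -
  define D where "D = U - 3"
  define len where "len t = 3 + min D (R - p - t * D)" for t
  have "3 \<le> len t" "len t \<le> U" for t using p_ge U_eq unfolding len_def D_def by auto
  moreover have "U dvd c + U + t * U" for t using c by simp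
  ultimately have "\<exists>P. lifted_path (c + U + t * U) U P \<and> length P = len t" for t
    using lifted_path_of_length by blast
  then obtain Q where Q: "\<And>t. lifted_path (c + U + t * U) U (Q t) \<and> length (Q t) = len t"
    by metis
  define ys where "ys = concat (map Q [0..<k - 1])"
  have "lifted_path (c + U) ((k - 1) * U) ys"
    unfolding ys_def using k_ge Q by (intro lifted_path_concat) auto
  from lifted_path_append[OF S this] have path: "lifted_path c n (S @ ys)"
    using n_eq_U_add by (simp add: mult.commute)
  have "length ys = (\<Sum>t<k - 1. len t)"
    unfolding ys_def length_concat map_map comp_def using Q
    by (simp add: interv_sum_list_conv_sum_set_nat atLeast0LessThan)
  also have "\<dots> = 3 * (k - 1) + min (R - p) ((k - 1) * D)"
    unfolding len_def sum.distrib
      using sum_min_greedy[where N = "k - 1" and D = D and r = "R - p"] by simp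
  also have "\<dots> = R"
  proof -
    have "(k - 1) * D = U * (k - 1) - p"
      unfolding D_def p_eq_3_mult by (metis diff_mult_distrib2 mult.commute)
    then show ?thesis using R p_eq_3_mult[symmetric] by (simp add: min_def) linarith
  qed
  finally have "length ys = R" .
  moreover have "3 \<le> length (S @ ys)" using \<open>length ys = R\<close> R(1) p_ge by simp
  ultimately show ?thesis using lifted_path_cycle[OF path] by blast
qed

text \<open>Cycles shorter than \<open>length S + p\<close> must be found inside the block; longer ones start
  with \<open>S\<close>, or with the Hamiltonian path \<open>T\<close> of the block when \<open>S\<close> cannot be extended far
  enough.\<close>

lemma lifted_pancyclic_via_block_paths:
  assumes c: "U dvd c"
    and short: "\<And>m. 3 \<le> m \<Longrightarrow> m < length S + p \<Longrightarrow>
      \<exists>cy. lifted_cycle c cy \<and> length cy = m \<and> {a, b} \<in> cycle_edges cy"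
    and S: "lifted_path c U S" "sublist [a, b] S \<or> sublist [b, a] S"
    and T: "lifted_path c U T" "length T = U" "sublist [a, b] T \<or> sublist [b, a] T"
  shows "lifted_pancyclic c a b"
proof -
  have extend: "\<exists>cy. lifted_cycle c cy \<and> length cy = m \<and> {a, b} \<in> cycle_edges cy"
    if P: "lifted_path c U P" "sublist [a, b] P \<or> sublist [b, a] P"
      and m: "length P + p \<le> m" "m \<le> length P + U * (k - 1)" for P m
  proof -
    have "p \<le> m - length P" "m - length P \<le> U * (k - 1)" using m by linarith+
    then obtain ys where ys: "lifted_cycle c (P @ ys)" "length ys = m - length P"
      using lifted_cycle_extend[OF c P(1)] by blast
    have "sublist [a, b] (P @ ys) \<or> sublist [b, a] (P @ ys)"
      using P(2) sublist_order.order.trans[OF _ sublist_append_rightI] by blast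
    then have "{a, b} \<in> cycle_edges (P @ ys)"
      using sublist_imp_cycle_edge by (metis insert_commute)
    then show ?thesis using ys m by (intro exI[of _ "P @ ys"]) auto
  qed
  show ?thesis
    unfolding lifted_pancyclic_def
  proof (intro allI impI)
    fix m assume m: "3 \<le> m \<and> m \<le> n"
    consider "m < length S + p" | "length S + p \<le> m" "m \<le> length S + U * (k - 1)"
      | "length S + U * (k - 1) < m" by linarith
    then show "\<exists>cy. lifted_cycle c cy \<and> length cy = m \<and> {a, b} \<in> cycle_edges cy"
    proof cases
      case 1
      then show ?thesis using short m by blast
    next
      case 2
      then show ?thesis using extend[OF S] by blast
    next
      case 3
      have "U * 2 \<le> U * (k - 1)" using k_ge by (intro mult_le_mono2) simp
      then have "length T + p \<le> m" using 3 T(2) U_eq by simp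
      moreover have "m \<le> length T + U * (k - 1)" using m T(2) n_eq_U_add by simp
      ultimately show ?thesis using extend[OF T(1) T(3)] by blast
    qed
  qed
qed

section \<open>Cycles of all lengths through every edge\<close>

definition fan_cycle :: "nat \<Rightarrow> nat \<Rightarrow> nat \<Rightarrow> nat list" where
  "fan_cycle c a b = (c + p + 1) # [c + a..<c + b + 1]"

lemma length_fan_cycle: "a < b \<Longrightarrow> length (fan_cycle c a b) = b - a + 2"
  unfolding fan_cycle_def by simp

lemma lifted_cycle_fan_cycle:
  assumes c: "U dvd c" and ab: "a < b" "b \<le> p"
  shows "lifted_cycle c (fan_cycle c a b)"
proof -
  have "successively adj (fan_cycle c a b)"
    unfolding fan_cycle_def using adj_lower_hub[OF c, of a] ab successively_adj_upt
    by (simp add: successively_Cons del: upt_Suc)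
  moreover have "adj_wrap (c + b) (c + p + 1)"
    unfolding adj_wrap_def using adj_lower_hub[OF c ab(2)] by (simp add: adj_commute)
  moreover have "c + p + 1 < c + n" using three_U_le_n U_eq by simp
  ultimately show ?thesis
    unfolding lifted_cycle_def using ab by (auto simp: fan_cycle_def)
qed

definition two_hub_cycle :: "nat \<Rightarrow> nat \<Rightarrow> nat \<Rightarrow> nat list" where
  "two_hub_cycle c a w = (c + p + 1) # [c + a..<c + p + 1] @ rev [c + p + 2..<c + p + 3 + w]"

lemma length_two_hub_cycle: "a < p \<Longrightarrow> length (two_hub_cycle c a w) = p - a + w + 3"
  unfolding two_hub_cycle_def by simp

lemma lifted_cycle_two_hub_cycle:
  assumes c: "U dvd c" and a: "a < p" and w: "w < p"
  shows "lifted_cycle c (two_hub_cycle c a w)"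
proof -
  define X where "X = [c + a..<c + p + 1]"
  define Y where "Y = rev [c + p + 2..<c + p + 3 + w]"
  have "successively (\<lambda>x y. adj y x) [s..<t]" for s t
    by (rule successively_upt) (simp add: adj_commute adj_Suc)
  then have Y: "Y \<noteq> []" "hd Y = c + p + 2 + w" "last Y = c + p + 2" "successively adj Y"
    unfolding Y_def by (simp_all add: hd_rev last_rev del: upt_Suc)
  have X: "X \<noteq> []" "hd X = c + a" "last X = c + p" "successively adj X"
    using a successively_adj_upt unfolding X_def by (auto simp del: upt_Suc)
  have "adj (c + p) (c + p + 2 + w)"
    using adj_upper_hub[OF c, of "w + 2"] w by (simp add: add.assoc)
  moreover have "adj (c + p + 1) (c + a)" using adj_lower_hub[OF c, of a] a by simp
  ultimately have "successively adj ((c + p + 1) # X @ Y)"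
    using X Y by (simp add: successively_append_iff successively_Cons)
  moreover have "adj_wrap (c + p + 2) (c + p + 1)"
    unfolding adj_wrap_def using adj_Suc[of "c + p + 1"] by (simp add: adj_commute)
  moreover have "c + p + 3 + w \<le> c + n" using three_U_le_n U_eq w by simp
  ultimately show ?thesis
    unfolding lifted_cycle_def two_hub_cycle_def X_def[symmetric] Y_def[symmetric] using X Y a
    by (auto simp: X_def Y_def)
qed

lemma lifted_pancyclic_ring_lower:
  assumes c: "U dvd c" and x: "x < p"
  shows "lifted_pancyclic c (c + x) (c + x + 1)"
proof (rule lifted_pancyclic_via_block_paths[OF c _ _ _
      lifted_path_upper_jump_path[OF c order_refl]])
  have sub: "sublist [c + x, c + x + 1] ([] @ [c..<c + p + 1] @ ss)" for ss
    using x by (intro sublist_upt) simp_all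
  show "lifted_path c U (upper_jump_path c 0)" using lifted_path_upper_jump_path[OF c] by simp
  show "sublist [c + x, c + x + 1] (upper_jump_path c 0)
      \<or> sublist [c + x + 1, c + x] (upper_jump_path c 0)"
    using sub[of "[]"] unfolding upper_jump_path_def by simp
  show "length (upper_jump_path c p) = U" using length_upper_jump_path[of p c] U_eq by simp
  show "sublist [c + x, c + x + 1] (upper_jump_path c p)
      \<or> sublist [c + x + 1, c + x] (upper_jump_path c p)"
    using sub unfolding upper_jump_path_def by simp
  fix m assume m: "3 \<le> m" "m < length (upper_jump_path c 0) + p"
  show "\<exists>cy. lifted_cycle c cy \<and> length cy = m \<and> {c + x, c + x + 1} \<in> cycle_edges cy"
  proof (cases "m \<le> p + 2")
    case True
    define a where "a = min x (p + 2 - m)"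
    have ab: "a < a + m - 2" "a + m - 2 \<le> p" using m True unfolding a_def by auto
    have "sublist [c + x, c + x + 1] ([c + p + 1] @ [c + a..<c + (a + m - 2) + 1] @ [])"
      using m(1) True x unfolding a_def by (intro sublist_upt) auto
    then have "{c + x, c + x + 1} \<in> cycle_edges (fan_cycle c a (a + m - 2))"
      unfolding fan_cycle_def by (intro sublist_imp_cycle_edge) simp
    then show ?thesis
      using lifted_cycle_fan_cycle[OF c ab] length_fan_cycle[OF ab(1)] m(1) by auto
  next
    case False
    have w: "m - p - 3 < p" using m length_upper_jump_path[of 0 c] by simp
    have "sublist [c + x, c + x + 1] ([c + p + 1] @ [c..<c + p + 1]
        @ rev [c + p + 2..<c + p + 3 + (m - p - 3)])"
      using x by (intro sublist_upt) auto
    then have "{c + x, c + x + 1} \<in> cycle_edges (two_hub_cycle c 0 (m - p - 3))"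
      unfolding two_hub_cycle_def by (intro sublist_imp_cycle_edge) simp
    then show ?thesis
      using lifted_cycle_two_hub_cycle[OF c _ w] length_two_hub_cycle[of 0 c] p_ge False
      by (intro exI[of _ "two_hub_cycle c 0 (m - p - 3)"]) auto
  qed
qed

lemma lifted_pancyclic_ring_middle:
  assumes c: "U dvd c"
  shows "lifted_pancyclic c (c + p + 1) (c + p)"
proof (rule lifted_pancyclic_via_block_paths[OF c _ lifted_path_block_path[OF c, of 1 p 0] _
      lifted_path_block_path[OF c, of p p "p - 1"]])
  have "block_path c 1 p 0 = [c] @ [c + p + 1, c + p] @ []" unfolding block_path_def by simp
  then show "sublist [c + p + 1, c + p] (block_path c 1 p 0)
      \<or> sublist [c + p, c + p + 1] (block_path c 1 p 0)"
    by (metis sublist_appendI)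
  show "sublist [c + p + 1, c + p] (block_path c p p (p - 1))
      \<or> sublist [c + p, c + p + 1] (block_path c p p (p - 1))"
    unfolding block_path_def by (simp add: sublist_def) blast
  show "length (block_path c p p (p - 1)) = U"
    using length_block_path[of p "p - 1" c p] p_ge U_eq by simp
  fix m assume m: "3 \<le> m" "m < length (block_path c 1 p 0) + p"
  then have ab: "p + 2 - m < p" "p \<le> p" and len: "length (fan_cycle c (p + 2 - m) p) = m"
    using length_block_path[of p 0 c 1] length_fan_cycle[of "p + 2 - m" p c] p_ge by auto
  have "{last (fan_cycle c (p + 2 - m) p), hd (fan_cycle c (p + 2 - m) p)}
      \<in> cycle_edges (fan_cycle c (p + 2 - m) p)"
    by (rule last_hd_in_cycle_edges) (simp add: fan_cycle_def)
  then have "{c + p + 1, c + p} \<in> cycle_edges (fan_cycle c (p + 2 - m) p)"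
    unfolding fan_cycle_def using ab by (simp add: insert_commute)
  then show "\<exists>cy. lifted_cycle c cy \<and> length cy = m \<and> {c + p + 1, c + p} \<in> cycle_edges cy"
    using lifted_cycle_fan_cycle[OF c ab] len by blast
qed (use p_ge in auto)

lemma lifted_pancyclic_lower_hub:
  assumes c: "U dvd c" and x: "x < p"
  shows "lifted_pancyclic c (c + p + 1) (c + x)"
proof (rule lifted_pancyclic_via_block_paths[OF c _ lifted_path_block_path[OF c, of 1 "max 1 x" 0] _
      lifted_path_block_path[OF c, of "x + 1" "x + 1" "p - 1"]])
  show "sublist [c + p + 1, c + x] (block_path c 1 (max 1 x) 0)
      \<or> sublist [c + x, c + p + 1] (block_path c 1 (max 1 x) 0)"
  proof (cases "x = 0")
    case True
    then have "block_path c 1 (max 1 x) 0 = [] @ [c + x, c + p + 1] @ [c + 1..<c + p + 1]"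
      unfolding block_path_def by simp
    then show ?thesis by (metis sublist_appendI)
  next
    case False
    then have "block_path c 1 (max 1 x) 0 = [c] @ [c + p + 1, c + x] @ [c + x + 1..<c + p + 1]"
      unfolding block_path_def using x by (simp add: upt_conv_Cons)
    then show ?thesis by (metis sublist_appendI)
  qed
  show "sublist [c + p + 1, c + x] (block_path c (x + 1) (x + 1) (p - 1))
      \<or> sublist [c + x, c + p + 1] (block_path c (x + 1) (x + 1) (p - 1))"
    unfolding block_path_def by (simp add: sublist_def) blast
  show "length (block_path c (x + 1) (x + 1) (p - 1)) = U"
    using length_block_path[of "x + 1" "p - 1" c "x + 1"] x U_eq by simp
  fix m assume m: "3 \<le> m" "m < length (block_path c 1 (max 1 x) 0) + p"
  then have m_le: "m \<le> 2 * p + 2 - x"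
    using length_block_path[of "max 1 x" 0 c 1] x p_ge by auto
  show "\<exists>cy. lifted_cycle c cy \<and> length cy = m \<and> {c + p + 1, c + x} \<in> cycle_edges cy"
  proof (cases "m \<le> p + 2 - x")
    case True
    have ab: "x < x + m - 2" "x + m - 2 \<le> p" using m(1) True x by auto
    have "fan_cycle c x (x + m - 2) = [] @ [c + p + 1, c + x] @ [c + x + 1..<c + (x + m - 2) + 1]"
      unfolding fan_cycle_def using ab by (simp add: upt_conv_Cons del: upt_Suc)
    then have "{c + p + 1, c + x} \<in> cycle_edges (fan_cycle c x (x + m - 2))"
      by (metis sublist_appendI sublist_imp_cycle_edge)
    then show ?thesis
      using lifted_cycle_fan_cycle[OF c ab] length_fan_cycle[OF ab(1)] m(1) by auto
  next
    case False
    define w where "w = m + x - p - 3"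
    have w: "w < p" "length (two_hub_cycle c x w) = m"
      using False m_le x length_two_hub_cycle[OF x] unfolding w_def by auto
    have "two_hub_cycle c x w = [] @ [c + p + 1, c + x] @ ([c + x + 1..<c + p + 1]
        @ rev [c + p + 2..<c + p + 3 + w])"
      unfolding two_hub_cycle_def using x by (simp add: upt_conv_Cons)
    then have "{c + p + 1, c + x} \<in> cycle_edges (two_hub_cycle c x w)"
      by (metis sublist_appendI sublist_imp_cycle_edge)
    then show ?thesis using lifted_cycle_two_hub_cycle[OF c x w(1)] w(2) by blast
  qed
qed (use x in auto)

text \<open>The reflection \<open>x \<mapsto> 2c + U - x\<close> maps the segment from \<open>c\<close> to \<open>c + U\<close> onto itself
  and swaps its hubs; the summand \<open>2n\<close> only keeps the subtraction in \<open>\<nat>\<close> from truncating.\<close>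

lemma pancyclic_edge_reflect:
  assumes "U dvd c" "lifted_pancyclic c a b"
  shows "pancyclic_edge {(2 * c + U + 2 * n - a) mod n, (2 * c + U + 2 * n - b) mod n}"
proof -
  have "U dvd 2 * c + U + 2 * n" using assms(1) U_dvd_n by simp
  then show ?thesis
    using pancyclic_edge_mod[OF lifted_pancyclic_reflect[OF assms(2)]] by simp
qed

lemma pancyclic_edge_ring:
  assumes "x < n"
  shows "pancyclic_edge {x, (x + 1) mod n}"
proof -
  define r where "r = x mod U"
  define c where "c = x - r"
  have c: "U dvd c" and x: "x = c + r" and r: "r < U"
    unfolding c_def r_def using U_pos by (simp_all add: minus_mod_eq_mult_div)
  have x_mod: "x mod n = x" using assms by simp
  consider "r < p" | "r = p" | "p < r" by linarith
  then show ?thesis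
  proof cases
    case 1
    show ?thesis
      using pancyclic_edge_mod[OF lifted_pancyclic_ring_lower[OF c 1]] x x_mod by simp
  next
    case 2
    show ?thesis
      using pancyclic_edge_mod[OF lifted_pancyclic_ring_middle[OF c]] x x_mod 2
      by (simp add: insert_commute)
  next
    case 3
    have x0: "2 * p - r < p" using 3 r U_eq by simp
    have "2 * c + U + 2 * n - (c + (2 * p - r)) = (x + 1) + 2 * n"
      "2 * c + U + 2 * n - (c + (2 * p - r) + 1) = x + 2 * n"
      using 3 r x U_eq by simp_all
    then show ?thesis
      using pancyclic_edge_reflect[OF c lifted_pancyclic_ring_lower[OF c x0]] x_mod
      by (simp add: insert_commute)
  qed
qed

lemma pancyclic_edge_chord:
  assumes "(x, d) \<in> chords"
  shows "pancyclic_edge {x, (x + d) mod n}"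
proof -
  from assms consider "x < n" "d = 1"
    | c j where "c \<in> blocks" "j < p" "x = c + j" "d = p + 1 - j"
    | c j where "c \<in> blocks" "j < p" "x = c + p" "d = j + 2"
    unfolding chords_def by auto
  then show ?thesis
  proof cases
    case 1
    then show ?thesis using pancyclic_edge_ring by simp
  next
    case (2 c j)
    have c: "U dvd c" "c + U \<le> n" using 2(1) blocks_le by (auto simp: blocks_def)
    then have "(c + p + 1) mod n = x + d" "(c + j) mod n = x" using 2 U_eq by simp_all
    then show ?thesis
      using pancyclic_edge_mod[OF lifted_pancyclic_lower_hub[OF c(1) 2(2)]] c 2 U_eq
      by (simp add: insert_commute)
  next
    case (3 c j)
    have c: "U dvd c" "c + U \<le> n" using 3(1) blocks_le by (auto simp: blocks_def)
    have "p - 1 - j < p" using p_ge by simp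
    moreover have "2 * c + U + 2 * n - (c + p + 1) = x + 2 * n"
      "2 * c + U + 2 * n - (c + (p - 1 - j)) = (x + d) + 2 * n"
      using 3 U_eq by simp_all
    moreover have "x mod n = x" using c 3 U_eq by simp
    ultimately show ?thesis
      using pancyclic_edge_reflect[OF c(1) lifted_pancyclic_lower_hub[OF c(1)], of "p - 1 - j"]
        by simp
  qed
qed

lemma edge_pancyclic_edges: "edge_pancyclic {..<n} edges"
  unfolding edge_pancyclic_def
proof (intro allI impI ballI)
  fix m e assume "3 \<le> m \<and> m \<le> card {..<n}" "e \<in> edges"
  moreover obtain x d where "(x, d) \<in> chords" "e = {x, (x + d) mod n}"
    using \<open>e \<in> edges\<close> unfolding edges_def by auto
  ultimately show "\<exists>c. is_cycle {..<n} edges c \<and> length c = m \<and> e \<in> cycle_edges c"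
    using pancyclic_edge_chord unfolding pancyclic_edge_def by simp
qed

end

theorem theorem5:
  fixes k :: nat
  assumes "k \<ge> 3"
  shows "\<exists>(V :: nat set) E. simple_graph V E \<and> edge_pancyclic V E \<and>
           card V = 6 * k^2 - 5 * k \<and> card E = 2 * (6 * k^2 - 5 * k) - k"
proof -
  define n where "n = k * (6 * k - 5)"
  interpret pancyclic_construction k "3 * k - 3" "6 * k - 5" n
    using assms unfolding n_def by unfold_locales auto
  have "n = 6 * k^2 - 5 * k"
    unfolding n_def by (simp add: power2_eq_square diff_mult_distrib2 algebra_simps)
  then show ?thesis
    using simple_graph_edges edge_pancyclic_edges card_edges
      by (intro exI[of _ "{..<n}"] exI[of _ edges]) simp
qed

end
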